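(* Let $N,k,R$ be positive integers with $N>4kR$, and consider the open chain with sites $1,\dots,N$ and distance $|i-j|$. Let $H$ be an operator (not necessarily Hermitian) on $(\mathbb{C}^2)^{\otimes N}$ that is $k$-local and has range at most $R$. If $H|W^p\rangle=E_p|W^p\rangle$ with $E_p\in\mathbb{C}$ for every $p\in\{0,1,\dots,N\}$, then there exist constants $\Omega,\omega\in\mathbb{C}$ such that $E_p=\Omega+\omega p$ for all $p\in\{0,1,\dots,N\}$ (with $\Omega,\omega\in\mathbb{R}$ if $H$ is Hermitian).
   Context: System of $N$ qubits on sites $1,\dots,N$ with local basis $|0\rangle,|1\rangle$. For each site $i$, $s_i^\dagger$ acts on site $i$ as $s^\dagger|0\rangle=|1\rangle$, $s^\dagger|1\rangle=0$, and $s_i=(s_i^\dagger)^\dagger$ (so $s|1\rangle=|0\rangle$, $s|0\rangle=0$); $n_i=s_i^\dagger s_i$. $|\overline 0\rangle=|0\rangle^{\otimes N}$. Every operator has a unique expansion as a linear combination of normal-ordered strings $s^\dagger_{j_1}\cdots s^\dagger_{j_n}s_{k_1}\cdots s_{k_m}$ (the $j$'s pairwise distinct, the $k$'s pairwise distinct, overlaps between the two sets allowed; the empty string is $I$); the sites of such a string are $\{j_1,\dots,j_n,k_1,\dots,k_m\}$. A string has range $R$, where $R$ is the smallest positive integer such that all pairwise distances between its sites are $<R$. An operator has range at most $R$ if every string with nonzero coefficient in its expansion has range at most $R$; it is $k$-local if every such string involves at most $k$ distinct sites. Dicke states: $S^\dagger=\sum_{i=1}^N s_i^\dagger$ and, for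 $p=0,\dots,N$, $|W^p\rangle=(S^\dagger)^p|\overline 0\rangle/\|(S^\dagger)^p|\overline 0\rangle\|$, i.e. the normalized equal-weight superposition of all basis states with exactly $p$ sites in state $|1\rangle$. *)

theory Defs
  imports Complex_Main
begin

text \<open>Basis states of N qubits on sites 1..N are identified with the set of sites
in state |1>, i.e. subsets of {1..N}.  An operator is given by the coefficients
c J K of its (unique) normal-ordered expansion
  H = sum over J,K of c J K * s^dagger_J s_K,
where J is the set of created sites and K the set of annihilated sites.\<close>

definition sites :: "nat \<Rightarrow> nat set" where
  "sites N = {1..N}"

definition coeffs_on :: "nat \<Rightarrow> (nat set \<Rightarrow> nat set \<Rightarrow> complex) \<Rightarrow> bool" where
  "coeffs_on N c \<longleftrightarrow> (\<forall>J K. c J K \<noteq> 0 \<longrightarrow> J \<subseteq> sites N \<and> K \<subseteq> sites N)"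

definition string_elem :: "nat set \<Rightarrow> nat set \<Rightarrow> nat set \<Rightarrow> nat set \<Rightarrow> complex" where
  "string_elem J K y x =
     (if K \<subseteq> x \<and> J \<inter> (x - K) = {} \<and> y = (x - K) \<union> J then 1 else 0)"

definition op_mat :: "nat \<Rightarrow> (nat set \<Rightarrow> nat set \<Rightarrow> complex) \<Rightarrow> nat set \<Rightarrow> nat set \<Rightarrow> complex" where
  "op_mat N c y x = (\<Sum>(J,K)\<in>Pow (sites N) \<times> Pow (sites N). c J K * string_elem J K y x)"

definition op_apply :: "nat \<Rightarrow> (nat set \<Rightarrow> nat set \<Rightarrow> complex) \<Rightarrow> (nat set \<Rightarrow> complex) \<Rightarrow> nat set \<Rightarrow> complex" where
  "op_apply N c v y = (\<Sum>x\<in>Pow (sites N). op_mat N c y x * v x)"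

definition k_local :: "nat \<Rightarrow> (nat set \<Rightarrow> nat set \<Rightarrow> complex) \<Rightarrow> bool" where
  "k_local k c \<longleftrightarrow> (\<forall>J K. c J K \<noteq> 0 \<longrightarrow> card (J \<union> K) \<le> k)"

definition range_le :: "nat \<Rightarrow> (nat set \<Rightarrow> nat set \<Rightarrow> complex) \<Rightarrow> bool" where
  "range_le R c \<longleftrightarrow> (\<forall>J K. c J K \<noteq> 0 \<longrightarrow>
      (\<forall>i\<in>J \<union> K. \<forall>j\<in>J \<union> K. \<bar>int i - int j\<bar> < int R))"

definition hermitian_op :: "nat \<Rightarrow> (nat set \<Rightarrow> nat set \<Rightarrow> complex) \<Rightarrow> bool" where
  "hermitian_op N c \<longleftrightarrow> (\<forall>x\<in>Pow (sites N). \<forall>y\<in>Pow (sites N). op_mat N c y x = cnj (op_mat N c x y))"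

definition dicke :: "nat \<Rightarrow> nat \<Rightarrow> nat set \<Rightarrow> complex" where
  "dicke N p x = (if x \<subseteq> sites N \<and> card x = p then complex_of_real (1 / sqrt (real (N choose p))) else 0)"

end

theory Submission
  imports Defs
begin

text \<open>For a basis state y of weight p, the eigenvalue equation for the Dicke state
W^p says that E_p is the sum of the matrix elements <y|H|x> over all x of weight p.
Each normal-ordered string contributes to this row sum a quantity that does not change
when y is enlarged by a site outside the support of the string. Two sites at distance
at least R are never both in the support of a string, so the mixed second difference
of the row sum in two such sites vanishes; with the sites 1 and N and y = {2..p+1}
this gives E_(p+2) - 2 E_(p+1) + E_p = 0, hence E is affine in p. If H is Hermitian,
(N choose p) E_p is the sum of all entries of a diagonal block of H and so is real.\<close>

lemma finite_sites [simp]: "finite (sites N)"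
  and card_sites [simp]: "card (sites N) = N"
  unfolding sites_def by simp_all

lemma string_elem_nonzero_source:
  assumes "string_elem J K y x \<noteq> 0"
  shows "x = (y - J) \<union> K"
  using assms unfolding string_elem_def by (auto split: if_splits)

lemma string_elem_insert_spectator:
  assumes "a \<notin> J \<union> K" and "a \<notin> x" and "a \<notin> y"
  shows "string_elem J K (insert a y) (insert a x) = string_elem J K y x"
proof -
  have "(insert a x - K) \<union> J = insert a ((x - K) \<union> J)"
    using assms by blast
  then have "insert a y = (insert a x - K) \<union> J \<longleftrightarrow> y = (x - K) \<union> J"
    using assms by (simp add: insert_ident)
  moreover have "K \<subseteq> insert a x \<longleftrightarrow> K \<subseteq> x" and "J \<inter> (insert a x - K) = {} \<longleftrightarrow> J \<inter> (x - K) = {}"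
    using assms by auto
  ultimately show ?thesis unfolding string_elem_def by simp
qed

definition string_row_sum :: "nat set \<Rightarrow> nat set \<Rightarrow> nat set \<Rightarrow> nat set \<Rightarrow> complex" where
  "string_row_sum S J K y = (\<Sum>x\<in>{x\<in>Pow S. card x = card y}. string_elem J K y x)"

lemma string_row_sum_eq:
  assumes "finite S"
  shows "string_row_sum S J K y =
    (if (y - J) \<union> K \<subseteq> S \<and> card ((y - J) \<union> K) = card y then string_elem J K y ((y - J) \<union> K) else 0)"
proof -
  let ?x0 = "(y - J) \<union> K"
  have "string_row_sum S J K y =
      (\<Sum>x\<in>{x\<in>Pow S. card x = card y}. if x = ?x0 then string_elem J K y ?x0 else 0)"
    unfolding string_row_sum_def using string_elem_nonzero_source by (intro sum.cong) auto
  then show ?thesis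
    using assms by simp
qed

lemma string_row_sum_insert_spectator:
  assumes "finite S" and "a \<in> S" and "a \<notin> J \<union> K" and "a \<notin> y" and "finite y"
  shows "string_row_sum S J K (insert a y) = string_row_sum S J K y"
proof -
  let ?x0 = "(y - J) \<union> K"
  have source: "(insert a y - J) \<union> K = insert a ?x0" and "a \<notin> ?x0"
    using assms(3,4) by auto
  have "card (insert a ?x0) = card (insert a y) \<longleftrightarrow> card ?x0 = card y" if "?x0 \<subseteq> S"
  proof -
    have "finite ?x0"
      using that assms(1) by (rule finite_subset)
    then show ?thesis
      using \<open>a \<notin> ?x0\<close> assms(4,5) by simp
  qed
  then have condition: "(insert a ?x0 \<subseteq> S \<and> card (insert a ?x0) = card (insert a y)) \<longleftrightarrow>
      (?x0 \<subseteq> S \<and> card ?x0 = card y)"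
    using assms(2) by blast
  show ?thesis
    unfolding string_row_sum_eq[OF assms(1)] source condition
      string_elem_insert_spectator[OF assms(3) \<open>a \<notin> ?x0\<close> assms(4)] ..
qed

definition weight_row_sum :: "nat \<Rightarrow> (nat set \<Rightarrow> nat set \<Rightarrow> complex) \<Rightarrow> nat set \<Rightarrow> complex" where
  "weight_row_sum N c y = (\<Sum>x\<in>{x\<in>Pow (sites N). card x = card y}. op_mat N c y x)"

lemma weight_row_sum_eq_sum_strings:
  "weight_row_sum N c y =
    (\<Sum>(J, K)\<in>Pow (sites N) \<times> Pow (sites N). c J K * string_row_sum (sites N) J K y)"
  unfolding weight_row_sum_def op_mat_def string_row_sum_def case_prod_beta sum_distrib_left
  by (rule sum.swap)

lemma weight_row_sum_second_difference:
  assumes "range_le R c" and "y \<subseteq> sites N" and "a \<in> sites N" and "b \<in> sites N"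
    and "a \<notin> y" and "b \<notin> y" and "a \<noteq> b" and "int R \<le> \<bar>int a - int b\<bar>"
  shows "weight_row_sum N c (insert a (insert b y)) - weight_row_sum N c (insert a y)
    - weight_row_sum N c (insert b y) + weight_row_sum N c y = 0"
proof -
  let ?t = "string_row_sum (sites N)"
  have "finite y"
    using assms(2) by (rule finite_subset) simp
  have string_difference:
    "c J K * (?t J K (insert a (insert b y)) - ?t J K (insert a y) - ?t J K (insert b y) + ?t J K y) = 0"
    for J K
  proof (cases "c J K = 0")
    case False
    have "a \<notin> J \<union> K \<or> b \<notin> J \<union> K"
    proof (rule ccontr)
      assume "\<not> (a \<notin> J \<union> K \<or> b \<notin> J \<union> K)"
      then have "\<bar>int a - int b\<bar> < int R"
        using assms(1) False unfolding range_le_def by blast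
      then show False
        using assms(8) by linarith
    qed
    then show ?thesis
    proof
      assume "a \<notin> J \<union> K"
      then have "?t J K (insert a (insert b y)) = ?t J K (insert b y)" and "?t J K (insert a y) = ?t J K y"
        using assms(3-7) \<open>finite y\<close> by (simp_all add: string_row_sum_insert_spectator)
      then show ?thesis
        by simp
    next
      assume "b \<notin> J \<union> K"
      then have "?t J K (insert b (insert a y)) = ?t J K (insert a y)" and "?t J K (insert b y) = ?t J K y"
        using assms(3-7) \<open>finite y\<close> by (simp_all add: string_row_sum_insert_spectator)
      then show ?thesis
        by (simp add: insert_commute)
    qed
  qed simp
  show ?thesis
    unfolding weight_row_sum_eq_sum_strings case_prod_beta
    using string_difference
    by (simp add: sum_subtractf[symmetric] sum.distrib[symmetric] ring_distribs)
qed

lemma dicke_eigenvalue_eq_weight_row_sum: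
  assumes "y \<subseteq> sites N" and "op_apply N c (dicke N (card y)) y = E * dicke N (card y) y"
  shows "E = weight_row_sum N c y"
proof -
  define d where "d = complex_of_real (1 / sqrt (real (N choose card y)))"
  have "card y \<le> N"
    using card_mono[OF finite_sites assms(1)] by simp
  then have "d \<noteq> 0"
    unfolding d_def by simp
  have "op_apply N c (dicke N (card y)) y =
      (\<Sum>x\<in>Pow (sites N). if card x = card y then op_mat N c y x * d else 0)"
    unfolding op_apply_def dicke_def d_def by (intro sum.cong) auto
  also have "\<dots> = weight_row_sum N c y * d"
    unfolding weight_row_sum_def sum_distrib_right by (rule sum.inter_filter[symmetric]) simp
  finally show ?thesis
    using assms \<open>d \<noteq> 0\<close> unfolding dicke_def d_def by simp
qed

lemma block_sum_real_if_hermitian: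
  assumes "hermitian_op N c" and "Y \<subseteq> Pow (sites N)"
  shows "(\<Sum>y\<in>Y. \<Sum>x\<in>Y. op_mat N c y x) \<in> \<real>"
proof -
  have "cnj (\<Sum>y\<in>Y. \<Sum>x\<in>Y. op_mat N c y x) = (\<Sum>y\<in>Y. \<Sum>x\<in>Y. op_mat N c x y)"
    using assms unfolding hermitian_op_def cnj_sum by (intro sum.cong refl) (metis subsetD)
  also have "\<dots> = (\<Sum>y\<in>Y. \<Sum>x\<in>Y. op_mat N c y x)"
    by (rule sum.swap)
  finally show ?thesis
    using Reals_cnj_iff by blast
qed

lemma weight_row_sum_real_if_hermitian:
  assumes "hermitian_op N c" and "p \<le> N"
    and "\<And>y. y \<subseteq> sites N \<Longrightarrow> card y = p \<Longrightarrow> weight_row_sum N c y = E"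
  shows "E \<in> \<real>"
proof -
  let ?Y = "{y\<in>Pow (sites N). card y = p}"
  have "card ?Y = N choose p"
    using n_subsets[OF finite_sites, of N p] by simp
  then have "of_nat (N choose p) * E = (\<Sum>y\<in>?Y. weight_row_sum N c y)"
    using assms(3) by simp
  also have "\<dots> = (\<Sum>y\<in>?Y. \<Sum>x\<in>?Y. op_mat N c y x)"
    unfolding weight_row_sum_def by (intro sum.cong) auto
  also have "\<dots> \<in> \<real>"
    by (rule block_sum_real_if_hermitian[OF assms(1)]) auto
  finally have "of_nat (N choose p) * E \<in> \<real>" .
  moreover have "E = inverse (of_nat (N choose p)) * (of_nat (N choose p) * E)"
    using assms(2) by simp
  ultimately show ?thesis
    by (metis Reals_inverse Reals_mult Reals_of_nat)
qed

lemma affine_if_second_differences_vanish: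
  fixes f :: "nat \<Rightarrow> 'a::comm_ring_1"
  assumes "\<And>p. p + 2 \<le> n \<Longrightarrow> f (p + 2) - 2 * f (p + 1) + f p = 0"
  shows "p \<le> n \<Longrightarrow> f p = f 0 + (f 1 - f 0) * of_nat p"
proof (induction p rule: induct_nat_012)
  case (ge2 p)
  have "f (Suc (Suc p)) = 2 * f (Suc p) - f p"
    using assms[of p] ge2.prems by (simp add: algebra_simps)
  also have "\<dots> = 2 * (f 0 + (f 1 - f 0) * of_nat (Suc p)) - (f 0 + (f 1 - f 0) * of_nat p)"
    using ge2 by simp
  also have "\<dots> = f 0 + (f 1 - f 0) * of_nat (Suc (Suc p))"
    by (simp add: algebra_simps)
  finally show ?case .
qed simp_all

lemma eigenvalue_second_difference:
  assumes "range_le R c" and "R < N"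
    and row_sum: "\<And>y. y \<subseteq> sites N \<Longrightarrow> E (card y) = weight_row_sum N c y"
    and "p + 2 \<le> N"
  shows "E (p + 2) - 2 * E (p + 1) + E p = 0"
proof -
  let ?y = "{2..p + 1}"
  have "?y \<subseteq> sites N" and "1 \<in> sites N" and "N \<in> sites N" and "1 \<notin> ?y" and "N \<notin> ?y"
    and "1 \<noteq> N" and "int R \<le> \<bar>int 1 - int N\<bar>"
    using assms(2,4) unfolding sites_def by auto
  then have second_difference:
    "weight_row_sum N c (insert 1 (insert N ?y)) - weight_row_sum N c (insert 1 ?y)
      - weight_row_sum N c (insert N ?y) + weight_row_sum N c ?y = 0"
    by (intro weight_row_sum_second_difference[OF assms(1)])
  have "card (insert 1 (insert N ?y)) = p + 2" and "card (insert 1 ?y) = p + 1"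
    and "card (insert N ?y) = p + 1" and "card ?y = p"
    using \<open>1 \<notin> ?y\<close> \<open>N \<notin> ?y\<close> \<open>1 \<noteq> N\<close> by simp_all
  then have "weight_row_sum N c (insert 1 (insert N ?y)) = E (p + 2)"
    and "weight_row_sum N c (insert 1 ?y) = E (p + 1)"
    and "weight_row_sum N c (insert N ?y) = E (p + 1)"
    and "weight_row_sum N c ?y = E p"
    using \<open>?y \<subseteq> sites N\<close> \<open>1 \<in> sites N\<close> \<open>N \<in> sites N\<close>
    by (simp_all add: row_sum[symmetric])
  with second_difference show ?thesis
    by (metis diff_diff_eq mult_2)
qed

theorem theorem1:
  fixes N k R :: nat and c :: "nat set \<Rightarrow> nat set \<Rightarrow> complex" and E :: "nat \<Rightarrow> complex"
  assumes "k > 0" and "R > 0" and "N > 4 * k * R"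
    and "coeffs_on N c" and "k_local k c" and "range_le R c"
    and "\<forall>p\<le>N. \<forall>y\<in>Pow (sites N). op_apply N c (dicke N p) y = E p * dicke N p y"
  shows "\<exists>\<Omega> \<omega>. (\<forall>p\<le>N. E p = \<Omega> + \<omega> * of_nat p)
            \<and> (hermitian_op N c \<longrightarrow> \<Omega> \<in> \<real> \<and> \<omega> \<in> \<real>)"
proof -
  have row_sum: "E (card y) = weight_row_sum N c y" if "y \<subseteq> sites N" for y
    using that assms(7) card_mono[OF finite_sites that]
    by (intro dicke_eigenvalue_eq_weight_row_sum) auto
  have "R \<le> 4 * k * R"
    using assms(1) by simp
  then have "R < N"
    using assms(3) by linarith
  have affine: "\<forall>p\<le>N. E p = E 0 + (E 1 - E 0) * of_nat p"
    using affine_if_second_differences_vanish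
        [OF eigenvalue_second_difference[OF assms(6) \<open>R < N\<close> row_sum]]
    by blast
  have real: "E p \<in> \<real>" if "hermitian_op N c" and "p \<le> N" for p
    by (rule weight_row_sum_real_if_hermitian[OF that]) (metis row_sum)
  show ?thesis
  proof (intro exI conjI impI)
    show "\<forall>p\<le>N. E p = E 0 + (E 1 - E 0) * of_nat p"
      by (rule affine)
  next
    assume "hermitian_op N c"
    have "E 0 \<in> \<real>"
      by (rule real[OF \<open>hermitian_op N c\<close>]) simp
    moreover have "E 1 \<in> \<real>"
      by (rule real[OF \<open>hermitian_op N c\<close>]) (use \<open>R < N\<close> in linarith)
    ultimately show "E 0 \<in> \<real>" and "E 1 - E 0 \<in> \<real>"
      by (auto intro: Reals_diff)
  qed
qed

end
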